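(* Suppose $K<m$, $m\ge2$, $n\ge3$, the belief prior $\mathcal D$ has full support, the weights satisfy $\max_iw_i<1/2$, and there is no reserve ($c=0$). Then the VCG scoring mechanism is strictly interim incentive compatible up to equal-shift misreports: for every recommender $i$, every belief $p_i\in[0,1]^m$, and every report $\hat p_i\in[0,1]^m$ that is not an equal-shift misreport of $p_i$ (i.e. $\hat p_i\ne p_i$ and there exist $q,q'$ with $p_{iq}-p_{iq'}\ne\hat p_{iq}-\hat p_{iq'}$), $\mathbb E_{p_{-i}\sim\mathcal D_{-i}}[U_i(p_i,p_i,p_{-i})]>\mathbb E_{p_{-i}\sim\mathcal D_{-i}}[U_i(p_i,\hat p_i,p_{-i})]$.
   Context: Setting: borrowers $M=\{1,\dots,m\}$, recommenders $N=\{1,\dots,n\}$; recommender $i$ has belief $p_{iq}\in[0,1]$ that $q$ repays and reports $\hat p_{iq}\in[0,1]$ simultaneously; $p_{-i}$ denotes the others' beliefs. Beliefs $p\sim\mathcal D$ on $[0,1]^{n\times m}$ (common knowledge), with $\mathcal D_{-i}$ the marginal of $p_{-i}$; full support means every nonempty relatively open subset has positive probability. Liquidity $K$, weights $w_i>0$, $\sum_iw_i=1$. VCG scoring mechanism without reserve: reported value $\hat v_i(a)=\sum_{q\in M}a_qw_i\hat p_{iq}$, true value $v_i(a)=\sum_{q}a_qw_ip_{iq}$ for $a\in\{0,1\}^m$. Allocation $x(\hat p)\in\arg\max\{\sum_{i\in N}\hat v_i(a):a\in\{0,1\}^m,\sum_qa_q\le K\}$; immediate payment made by $i$: $t_i(\hat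 p)=\sum_{j\ne i}\hat v_j(x^{-i}(\hat p_{-i}))-\sum_{j\ne i}\hat v_j(x(\hat p))$ with $x^{-i}(\hat p_{-i})\in\arg\max\{\sum_{j\ne i}\hat v_j(a)\}$ over the same feasible set; outcome-contingent payment to $i$ for each loaned $q$: $w_i$ if $q$ repays, $0$ otherwise. Utility of $i$ with belief $p_i$: $U_i(p_i,\hat p_i,\hat p_{-i})=v_i(x(\hat p))-t_i(\hat p)$. *)

theory Defs
  imports "HOL-Probability.Probability"
begin

text \<open>Recommenders are the elements of a finite type 'n, borrowers the elements of a
finite type 'm.  A belief (or report) profile is a matrix P :: real^'m^'n with
P$i$q the probability recommender i assigns to borrower q repaying.
An allocation is the set of funded borrowers (a \<in> {0,1}^m identified with its support).\<close>

definition unit_cube :: "(real^'m^'n) set" where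
  "unit_cube = {P. \<forall>i q. 0 \<le> P$i$q \<and> P$i$q \<le> 1}"

definition unit_box :: "(real^'m) set" where
  "unit_box = {r. \<forall>q. 0 \<le> r$q \<and> r$q \<le> 1}"

definition feasible :: "nat \<Rightarrow> ('m::finite) set set" where
  "feasible K = {A. card A \<le> K}"

definition rep_value :: "real^'n \<Rightarrow> real^'m^'n \<Rightarrow> 'n \<Rightarrow> ('m::finite) set \<Rightarrow> real" where
  "rep_value w P j A = (\<Sum>q\<in>A. w$j * P$j$q)"

definition total_value :: "real^'n \<Rightarrow> real^'m^'n \<Rightarrow> ('m::finite) set \<Rightarrow> real" where
  "total_value w P A = (\<Sum>j\<in>(UNIV::'n::finite set). rep_value w P j A)"

definition others_value :: "real^'n \<Rightarrow> real^'m^'n \<Rightarrow> 'n \<Rightarrow> ('m::finite) set \<Rightarrow> real" where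
  "others_value w P i A = (\<Sum>j\<in>(UNIV::'n::finite set) - {i}. rep_value w P j A)"

definition vcg_allocation ::
  "real^'n \<Rightarrow> nat \<Rightarrow> (real^('m::finite)^('n::finite) \<Rightarrow> 'm set) \<Rightarrow> bool" where
  "vcg_allocation w K x \<longleftrightarrow>
     (\<forall>P\<in>unit_cube. x P \<in> feasible K \<and>
        (\<forall>A\<in>feasible K. total_value w P A \<le> total_value w P (x P)))"

definition vcg_payment ::
  "real^'n \<Rightarrow> nat \<Rightarrow> (real^('m::finite)^('n::finite) \<Rightarrow> 'm set) \<Rightarrow> 'n \<Rightarrow> real^'m^'n \<Rightarrow> real" where
  "vcg_payment w K x i P =
     Max (others_value w P i ` feasible K) - others_value w P i (x P)"

definition upd_row :: "real^'m^'n \<Rightarrow> 'n \<Rightarrow> real^'m \<Rightarrow> real^'m^'n" where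
  "upd_row P i r = (\<chi> j. if j = i then r else P$j)"

text \<open>Utility U_i(p_i, ph_i, p_{-i}) of recommender i with belief bel reporting rep, the
other reports being the rows j \<noteq> i of P.\<close>
definition utility ::
  "real^'n \<Rightarrow> nat \<Rightarrow> (real^('m::finite)^('n::finite) \<Rightarrow> 'm set) \<Rightarrow> 'n
    \<Rightarrow> real^'m \<Rightarrow> real^'m \<Rightarrow> real^'m^'n \<Rightarrow> real" where
  "utility w K x i bel rep P =
     (let Q = upd_row P i rep in (\<Sum>q\<in>x Q. w$i * bel$q) - vcg_payment w K x i Q)"

definition full_support :: "(real^('m::finite)^('n::finite)) measure \<Rightarrow> bool" where
  "full_support D \<longleftrightarrow>
     (\<forall>U. openin (top_of_set unit_cube) U \<and> U \<noteq> {} \<longrightarrow> emeasure D U > 0)"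

end

theory Submission imports Defs begin

text \<open>Since the others' welfare without i does not depend on i's report, i's utility equals
the total truthful score of the allocation chosen on i's report, up to a term independent
of that report.  Truthful reporting maximises this score pointwise.  For strictness, a
report that is not an equal shift of the belief reverses the comparison of some pair q, q'.
Choosing the others' beliefs so that the allocation under the report is T \<union> {q} for a set T
of K - 1 strong borrowers, while under the truth q' beats q, gives a strict loss on an open
set of profiles, which has positive probability by full support.\<close>

definition others_score :: "real^'n \<Rightarrow> 'n \<Rightarrow> real^'m^'n \<Rightarrow> 'm \<Rightarrow> real" where
  "others_score w i P z = (\<Sum>j\<in>(UNIV::'n::finite set) - {i}. w$j * P$j$z)"

definition score :: "real^'n \<Rightarrow> 'n \<Rightarrow> real^'m \<Rightarrow> real^'m^'n \<Rightarrow> 'm \<Rightarrow> real" where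
  "score w i r P z = w$i * r$z + others_score w i P z"

lemma others_value_eq_sum_others_score:
  "others_value w P i A = (\<Sum>z\<in>A. others_score w i P z)"
  unfolding others_value_def rep_value_def others_score_def by (rule sum.swap)

lemma others_value_upd_row: "others_value w (upd_row P i r) i = others_value w P i"
  unfolding others_value_def rep_value_def upd_row_def by auto

lemma total_value_upd_row:
  fixes P :: "real^('m::finite)^('n::finite)"
  shows "total_value w (upd_row P i r) A = (\<Sum>z\<in>A. score w i r P z)"
proof -
  have "total_value w (upd_row P i r) A =
      rep_value w (upd_row P i r) i A + others_value w (upd_row P i r) i A"
    unfolding total_value_def others_value_def by (simp add: sum.remove[of UNIV i])
  then show ?thesis
    unfolding others_value_upd_row others_value_eq_sum_others_score
    by (simp add: rep_value_def upd_row_def score_def sum.distrib)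
qed

lemma utility_eq_sum_score:
  "utility w K x i bel r P =
     (\<Sum>z\<in>x (upd_row P i r). score w i bel P z) - Max (others_value w P i ` feasible K)"
  unfolding utility_def vcg_payment_def Let_def others_value_upd_row
  by (simp add: score_def sum.distrib others_value_eq_sum_others_score)

lemma sum_other_weights:
  fixes w :: "real^('n::finite)"
  assumes "(\<Sum>j\<in>UNIV. w$j) = 1"
  shows "(\<Sum>j\<in>UNIV - {i}. w$j) = 1 - w$i"
  using assms sum.remove[of "UNIV::'n set" i "\<lambda>j. w$j"] by simp

subsection \<open>Maximisers under a cardinality constraint\<close>

lemma feasible_exchange:
  fixes c :: "'m::finite \<Rightarrow> real"
  assumes "A \<in> feasible K" and "y \<in> A" and "z \<notin> A"
  shows "insert z (A - {y}) \<in> feasible K"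
    and "sum c (insert z (A - {y})) = sum c A - c y + c z"
proof -
  have "card A > 0" using assms(2) by (auto simp: card_gt_0_iff)
  then have "card (insert z (A - {y})) = card A"
    using assms(2,3) by (simp add: card_Diff_singleton_if)
  then show "insert z (A - {y}) \<in> feasible K" using assms(1) by (simp add: feasible_def)
  show "sum c (insert z (A - {y})) = sum c A - c y + c z"
    using assms(2,3) by (simp add: sum_diff1)
qed

lemma max_feasible_exchange_le:
  fixes c :: "'m::finite \<Rightarrow> real"
  assumes "A \<in> feasible K" and "\<forall>B\<in>feasible K. sum c B \<le> sum c A"
    and "y \<in> A" and "z \<notin> A"
  shows "c z \<le> c y"
  using assms feasible_exchange[OF assms(1,3,4)] by fastforce

lemma max_feasible_unfilled_nonpos:
  fixes c :: "'m::finite \<Rightarrow> real"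
  assumes "A \<in> feasible K" and "\<forall>B\<in>feasible K. sum c B \<le> sum c A"
    and "card A < K" and "z \<notin> A"
  shows "c z \<le> 0"
proof -
  have "insert z A \<in> feasible K" using assms(3,4) by (simp add: feasible_def)
  then show ?thesis using assms(2,4) by fastforce
qed

lemma max_feasible_contains:
  fixes c :: "'m::finite \<Rightarrow> real"
  assumes A: "A \<in> feasible K" and opt: "\<forall>B\<in>feasible K. sum c B \<le> sum c A"
    and T: "card T + 1 = K" "q \<notin> T"
    and pos: "c q > 0" and dom: "\<forall>z. z \<notin> insert q T \<longrightarrow> c z < c q"
  shows "q \<in> A"
proof (rule ccontr)
  assume q: "q \<notin> A"
  show False
  proof (cases "card A < K")
    case True
    then show False using max_feasible_unfilled_nonpos[OF A opt True q] pos by simp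
  next
    case False
    then have "\<not> A \<subseteq> T" using T(1) card_mono[of T A] by auto
    then obtain z where "z \<in> A" "z \<notin> insert q T" using q by blast
    then show False using max_feasible_exchange_le[OF A opt _ q, of z] dom by fastforce
  qed
qed

lemma max_feasible_excludes:
  fixes c :: "'m::finite \<Rightarrow> real"
  assumes A: "A \<in> feasible K" and opt: "\<forall>B\<in>feasible K. sum c B \<le> sum c A"
    and T: "card T + 1 = K" "q \<notin> T" "q' \<notin> T" "q \<noteq> q'" and q: "q \<in> A"
    and below: "\<forall>t\<in>T. c q' < c t"
  shows "q' \<notin> A"
proof
  assume q': "q' \<in> A"
  have "\<not> T \<subseteq> A"
  proof
    assume "T \<subseteq> A"
    then have "card (insert q (insert q' T)) \<le> card A" using q q' by (simp add: card_mono)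
    then show False using A T by (simp add: feasible_def)
  qed
  then obtain t where "t \<in> T" "t \<notin> A" by blast
  then show False using max_feasible_exchange_le[OF A opt q', of t] below by fastforce
qed

lemma upd_row_in_unit_cube: "P \<in> unit_cube \<Longrightarrow> r \<in> unit_box \<Longrightarrow> upd_row P i r \<in> unit_cube"
  unfolding unit_cube_def unit_box_def upd_row_def by auto

lemma vcg_allocation_upd_row:
  fixes x :: "real^('m::finite)^('n::finite) \<Rightarrow> 'm set"
  assumes "vcg_allocation w K x" "P \<in> unit_cube" "r \<in> unit_box"
  shows "x (upd_row P i r) \<in> feasible K"
    and "\<forall>B\<in>feasible K. sum (score w i r P) B \<le> sum (score w i r P) (x (upd_row P i r))"
proof -
  have "upd_row P i r \<in> unit_cube" using assms(2,3) by (rule upd_row_in_unit_cube)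
  then show "x (upd_row P i r) \<in> feasible K"
    and "\<forall>B\<in>feasible K. sum (score w i r P) B \<le> sum (score w i r P) (x (upd_row P i r))"
    using assms(1) unfolding vcg_allocation_def total_value_upd_row[symmetric] by blast+
qed

lemma utility_le_truthful:
  fixes x :: "real^('m::finite)^('n::finite) \<Rightarrow> 'm set"
  assumes "vcg_allocation w K x" "P \<in> unit_cube" "bel \<in> unit_box" "r \<in> unit_box"
  shows "utility w K x i bel r P \<le> utility w K x i bel bel P"
  using vcg_allocation_upd_row[OF assms(1,2,4)] vcg_allocation_upd_row[OF assms(1,2,3)]
  unfolding utility_eq_sum_score by simp

lemma utility_less_truthful:
  fixes x :: "real^('m::finite)^('n::finite) \<Rightarrow> 'm set"
  assumes vcg: "vcg_allocation w K x" and P: "P \<in> unit_cube"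
    and bel: "bel \<in> unit_box" and r: "r \<in> unit_box"
    and T: "card T + 1 = K" "q \<notin> T" "q' \<notin> T" "q \<noteq> q'"
    and pos: "0 < score w i r P q"
    and dom: "\<forall>z. z \<notin> insert q T \<longrightarrow> score w i r P z < score w i r P q"
    and below: "\<forall>t\<in>T. score w i r P q' < score w i r P t"
    and swap: "score w i bel P q < score w i bel P q'"
  shows "utility w K x i bel r P < utility w K x i bel bel P"
proof -
  let ?A = "x (upd_row P i r)" and ?c = "score w i bel P"
  note A = vcg_allocation_upd_row[OF vcg P r]
  have q: "q \<in> ?A" by (rule max_feasible_contains[OF A T(1,2) pos dom])
  have q': "q' \<notin> ?A" by (rule max_feasible_excludes[OF A T q below])
  have "sum ?c ?A < sum ?c (insert q' (?A - {q}))"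
    using feasible_exchange(2)[OF A(1) q q'] swap by simp
  also have "\<dots> \<le> sum ?c (x (upd_row P i bel))"
    using vcg_allocation_upd_row(2)[OF vcg P bel] feasible_exchange(1)[OF A(1) q q'] by blast
  finally show ?thesis unfolding utility_eq_sum_score by simp
qed

subsection \<open>Integrability of the utility\<close>

lemma continuous_on_others_score:
  "continuous_on UNIV (\<lambda>P::real^('m::finite)^('n::finite). others_score w i P z)"
  unfolding others_score_def by (intro continuous_intros)

lemma continuous_on_others_value:
  "continuous_on UNIV (\<lambda>P::real^('m::finite)^('n::finite). others_value w P i A)"
  unfolding others_value_eq_sum_others_score by (intro continuous_intros continuous_on_others_score)

lemma continuous_on_upd_row:
  "continuous_on UNIV (\<lambda>P::real^('m::finite)^('n::finite). upd_row P i r)"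
proof -
  have "continuous_on UNIV (\<lambda>P::real^'m^'n. if j = i then r else P$j)" for j
    by (cases "j = i") (auto intro: continuous_intros)
  then show ?thesis unfolding upd_row_def by (rule continuous_on_vec_lambda)
qed

lemma borel_measurable_utility:
  fixes x :: "real^('m::finite)^('n::finite) \<Rightarrow> 'm set"
  assumes x: "x \<in> borel \<rightarrow>\<^sub>M count_space UNIV"
  shows "(\<lambda>P. utility w K x i bel r P) \<in> borel_measurable borel"
proof -
  have alloc: "(\<lambda>P. x (upd_row P i r)) \<in> borel \<rightarrow>\<^sub>M count_space UNIV"
    using measurable_comp[OF borel_measurable_continuous_onI[OF continuous_on_upd_row] x]
    by (simp add: o_def)
  have "(\<lambda>P. (\<lambda>A P. \<Sum>z\<in>A. score w i bel P z) (x (upd_row P i r)) P) \<in> borel_measurable borel"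
    unfolding score_def
    by (rule measurable_compose_countable[OF _ alloc])
       (intro borel_measurable_continuous_onI continuous_intros continuous_on_others_score)
  moreover have "(\<lambda>P. Max (others_value w P i ` feasible K)) \<in> borel_measurable borel"
    by (rule borel_measurable_Max) (auto intro: borel_measurable_continuous_onI continuous_on_others_value)
  ultimately show ?thesis unfolding utility_eq_sum_score by (intro borel_measurable_diff) auto
qed

lemma sum_unit_interval_le_card:
  fixes f :: "'m::finite \<Rightarrow> real"
  assumes "\<And>z. 0 \<le> f z \<and> f z \<le> 1"
  shows "0 \<le> sum f A" and "sum f A \<le> CARD('m)"
proof -
  show "0 \<le> sum f A" using assms by (simp add: sum_nonneg)
  have "sum f A \<le> of_nat (card A) * 1" using assms by (intro sum_bounded_above) auto
  also have "\<dots> \<le> CARD('m)" by (simp add: card_mono)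
  finally show "sum f A \<le> CARD('m)" .
qed

context
  fixes w :: "real^('n::finite)" and P :: "real^('m::finite)^'n"
  assumes w_pos: "\<forall>j. w$j > 0" and w_sum: "(\<Sum>j\<in>UNIV. w$j) = 1" and P: "P \<in> unit_cube"
begin

lemma others_score_bounds: "0 \<le> others_score w i P z" "others_score w i P z \<le> 1 - w$i"
proof -
  show "0 \<le> others_score w i P z" unfolding others_score_def
    using w_pos P by (intro sum_nonneg) (auto simp: unit_cube_def less_imp_le)
  have "others_score w i P z \<le> (\<Sum>j\<in>UNIV - {i}. w$j)" unfolding others_score_def
    using w_pos P by (intro sum_mono) (auto simp: unit_cube_def less_imp_le intro: mult_left_le)
  then show "others_score w i P z \<le> 1 - w$i" by (simp add: sum_other_weights[OF w_sum])
qed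

lemma score_bounds:
  assumes "r \<in> unit_box"
  shows "0 \<le> score w i r P z" "score w i r P z \<le> 1"
proof -
  have "0 \<le> w$i * r$z" "w$i * r$z \<le> w$i"
    using assms w_pos by (auto simp: unit_box_def less_imp_le intro: mult_left_le)
  then show "0 \<le> score w i r P z" "score w i r P z \<le> 1"
    using others_score_bounds[of i z] unfolding score_def by linarith+
qed

lemma abs_utility_le_card:
  assumes "bel \<in> unit_box"
  shows "\<bar>utility w K x i bel r P\<bar> \<le> CARD('m)"
proof -
  have "others_score w i P z \<le> 1" for z
    using others_score_bounds(2)[of i z] w_pos[rule_format, of i] by linarith
  then have others: "0 \<le> others_value w P i A" "others_value w P i A \<le> CARD('m)" for A
    unfolding others_value_eq_sum_others_score
    using others_score_bounds(1) by (auto intro!: sum_unit_interval_le_card)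
  have "{} \<in> feasible K" by (simp add: feasible_def)
  then have "others_value w P i {} \<le> Max (others_value w P i ` feasible K)"
    by (intro Max_ge) auto
  moreover have "Max (others_value w P i ` feasible K) \<le> CARD('m)"
    using \<open>{} \<in> feasible K\<close> others by (subst Max_le_iff) auto
  moreover have "0 \<le> sum (score w i bel P) (x (upd_row P i r))"
    "sum (score w i bel P) (x (upd_row P i r)) \<le> CARD('m)"
    using score_bounds[OF assms] by (auto intro!: sum_unit_interval_le_card)
  ultimately show ?thesis
    unfolding utility_eq_sum_score using others(1)[of "{}"] by linarith
qed

end

lemma integrable_utility:
  fixes D :: "(real^('m::finite)^('n::finite)) measure"
  assumes "finite_measure D" "sets D = sets borel" "AE P in D. P \<in> unit_cube"
    and "\<forall>j. w$j > 0" "(\<Sum>j\<in>UNIV. w$j) = 1" "bel \<in> unit_box"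
    and "x \<in> borel \<rightarrow>\<^sub>M count_space UNIV"
  shows "integrable D (\<lambda>P. utility w K x i bel r P)"
proof -
  interpret finite_measure D by fact
  have "(\<lambda>P. utility w K x i bel r P) \<in> borel_measurable D"
    using borel_measurable_utility[OF assms(7)] measurable_cong_sets[OF assms(2) refl] by blast
  then show ?thesis
    using assms(3) abs_utility_le_card[OF assms(4,5) _ assms(6)]
    by (intro integrable_const_bound[where B="CARD('m)"]) auto
qed

subsection \<open>Profiles on which misreporting is strictly worse\<close>

lemma exists_profile_with_others_score:
  fixes w :: "real^('n::finite)" and g :: "'m::finite \<Rightarrow> real"
  assumes w_sum: "(\<Sum>j\<in>UNIV. w$j) = 1" and "w$i < 1"
    and g: "\<And>z. 0 \<le> g z \<and> g z \<le> 1 - w$i"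
  shows "\<exists>P\<in>unit_cube. \<forall>z. others_score w i P z = g z"
proof
  define P :: "real^'m^'n" where "P = (\<chi> j z. g z / (1 - w$i))"
  show "P \<in> unit_cube"
    unfolding unit_cube_def P_def using g \<open>w$i < 1\<close> by simp
  have "others_score w i P z = (1 - w$i) * (g z / (1 - w$i))" for z
    by (simp only: others_score_def P_def vec_lambda_beta sum_distrib_right[symmetric]
        sum_other_weights[OF w_sum])
  then show "\<forall>z. others_score w i P z = g z" using \<open>w$i < 1\<close> by simp
qed

text \<open>The others' scores are W = 1 - w_i on T, \<sigma> on q, \<sigma> + e on q' and 0 elsewhere, where
e lies strictly between the weighted belief gap and the weighted report gap of q and q'.
The bound w_i < 1/2, i.e.\ w_i < W, leaves room for \<sigma>.\<close>
lemma exists_profile_forcing_swap: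
  fixes w :: "real^('n::finite)" and bel r :: "real^('m::finite)"
  assumes w_pos: "\<forall>j. w$j > 0" and w_sum: "(\<Sum>j\<in>UNIV. w$j) = 1" and w_half: "w$i < 1/2"
    and bel: "bel \<in> unit_box" and r: "r \<in> unit_box"
    and gap: "bel$q - bel$q' < r$q - r$q'" and T: "q \<notin> T" "q' \<notin> T"
  shows "\<exists>P\<in>unit_cube. 0 < score w i r P q
           \<and> (\<forall>z. z \<notin> insert q T \<longrightarrow> score w i r P z < score w i r P q)
           \<and> (\<forall>t\<in>T. score w i r P q' < score w i r P t)
           \<and> score w i bel P q < score w i bel P q'"
proof -
  define wi where "wi = w$i"
  define W where "W = 1 - wi"
  have wi: "0 < wi" "wi < W" using w_pos w_half by (auto simp: wi_def W_def)
  have unit: "0 \<le> wi * r$z" "wi * r$z \<le> wi" "0 \<le> wi * bel$z" "wi * bel$z \<le> wi" for z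
    using bel r wi by (auto simp: unit_box_def intro: mult_left_le)
  have qq': "q \<noteq> q'" using gap by auto
  have "wi * bel$q - wi * bel$q' < wi * r$q - wi * r$q'"
    using mult_strict_left_mono[OF gap wi(1)] by (simp add: algebra_simps)
  define e where "e = ((wi * bel$q - wi * bel$q') + (wi * r$q - wi * r$q')) / 2"
  have e: "wi * bel$q - wi * bel$q' < e" "e < wi * r$q - wi * r$q'"
    using \<open>wi * bel$q - wi * bel$q' < wi * r$q - wi * r$q'\<close> unfolding e_def by simp_all
  have "max (wi - wi * r$q) (-e) < min (W - wi * r$q' - e) W"
    unfolding max_less_iff_conj min_less_iff_conj
    using e wi unit[of q] unit[of q'] by linarith
  then obtain \<sigma> where "max (wi - wi * r$q) (-e) < \<sigma>" "\<sigma> < min (W - wi * r$q' - e) W"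
    using dense by blast
  then have \<sigma>: "wi - wi * r$q < \<sigma>" "-e < \<sigma>" "\<sigma> + e < W - wi * r$q'" "\<sigma> < W"
    by simp_all
  have \<sigma>_range: "0 \<le> \<sigma>" "\<sigma> \<le> W" "0 \<le> \<sigma> + e" "\<sigma> + e \<le> W"
    using \<sigma> unit[of q] unit[of q'] by linarith+
  define g where
    "g z = (if z \<in> T then W else if z = q then \<sigma> else if z = q' then \<sigma> + e else 0)" for z
  have "0 \<le> g z \<and> g z \<le> W" for z
    using \<sigma>_range wi by (simp add: g_def)
  then obtain P where P: "P \<in> unit_cube" "\<forall>z. others_score w i P z = g z"
    using exists_profile_with_others_score[OF w_sum, of i g] w_half by (auto simp: W_def wi_def)
  have sc: "score w i s P z = wi * s$z + g z" for s z
    using P(2) by (simp add: score_def wi_def)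
  show ?thesis
  proof (intro bexI conjI allI impI ballI)
    show "0 < score w i r P q" using sc \<sigma> wi T by (simp add: g_def)
    have score_q: "score w i r P q = wi * r$q + \<sigma>" using sc T by (simp add: g_def)
    show "score w i r P z < score w i r P q" if "z \<notin> insert q T" for z
    proof (cases "z = q'")
      case True
      then show ?thesis using score_q sc e T qq' by (simp add: g_def)
    next
      case False
      then have "score w i r P z = wi * r$z" using that sc by (simp add: g_def)
      then show ?thesis using score_q \<sigma> unit[of z] by linarith
    qed
    show "score w i r P q' < score w i r P t" if "t \<in> T" for t
      using that sc \<sigma> T qq' unit[of t] by (auto simp: g_def)
    show "score w i bel P q < score w i bel P q'"
      using sc e T qq' by (simp add: g_def algebra_simps)
  qed (rule P(1))
qed

lemma continuous_on_score:
  "continuous_on UNIV (\<lambda>P::real^('m::finite)^('n::finite). score w i r P z)"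
  unfolding score_def by (intro continuous_intros continuous_on_others_score)

lemma exists_openin_utility_less:
  fixes x :: "real^('m::finite)^('n::finite) \<Rightarrow> 'm set" and bel r :: "real^'m"
  assumes w_pos: "\<forall>j. w$j > 0" and w_sum: "(\<Sum>j\<in>UNIV. w$j) = 1" and w_half: "w$i < 1/2"
    and vcg: "vcg_allocation w K x" and bel: "bel \<in> unit_box" and r: "r \<in> unit_box"
    and K: "1 \<le> K" "K < CARD('m)"
    and not_shift: "\<exists>q q'. bel$q - bel$q' \<noteq> r$q - r$q'"
  shows "\<exists>U. openin (top_of_set unit_cube) U \<and> U \<noteq> {}
           \<and> (\<forall>P\<in>U. utility w K x i bel r P < utility w K x i bel bel P)"
proof -
  obtain q q' where gap: "bel$q - bel$q' < r$q - r$q'"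
    using not_shift by (metis linorder_neqE_linordered_idom minus_diff_eq neg_less_iff_less)
  then have qq': "q \<noteq> q'" by auto
  have "K - 1 \<le> card (UNIV - {q, q'})" using K qq' by (simp add: card_Diff_subset)
  then obtain T where "T \<subseteq> UNIV - {q, q'}" "card T = K - 1"
    by (rule obtain_subset_with_card_n)
  then have T: "card T + 1 = K" "q \<notin> T" "q' \<notin> T" using K by auto
  define V where "V =
    {P. 0 < score w i r P q} \<inter> {P. score w i bel P q < score w i bel P q'}
    \<inter> (\<Inter>z\<in>- insert q T. {P. score w i r P z < score w i r P q})
    \<inter> (\<Inter>t\<in>T. {P. score w i r P q' < score w i r P t})"
  have "open V" unfolding V_def
    by (intro open_Int open_INT open_Collect_less continuous_on_score continuous_on_const finite ballI)
  then have "openin (top_of_set unit_cube) (unit_cube \<inter> V)" by (rule openin_open_Int)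
  moreover have "unit_cube \<inter> V \<noteq> {}"
    using exists_profile_forcing_swap[OF w_pos w_sum w_half bel r gap T(2,3)]
    unfolding V_def by blast
  moreover have "utility w K x i bel r P < utility w K x i bel bel P" if "P \<in> unit_cube \<inter> V" for P
    using that utility_less_truthful[OF vcg _ bel r T qq'] unfolding V_def by blast
  ultimately show ?thesis by blast
qed

theorem theorem5:
  fixes D :: "(real^('m::finite)^('n::finite)) measure"
    and w :: "real^'n" and K :: nat
    and x :: "real^'m^'n \<Rightarrow> 'm set"
    and i :: 'n and bel rep :: "real^'m"
  assumes "prob_space D" and "sets D = sets borel"
    and "emeasure D unit_cube = 1"
    and "full_support D"
    and "1 \<le> K" and "K < CARD('m)" and "CARD('m) \<ge> 2" and "CARD('n) \<ge> 3"
    and "\<forall>j. w$j > 0" and "(\<Sum>j\<in>UNIV. w$j) = 1" and "\<forall>j. w$j < 1/2"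
    and "vcg_allocation w K x"
    and "x \<in> borel \<rightarrow>\<^sub>M count_space UNIV"
    and "bel \<in> unit_box" and "rep \<in> unit_box"
    and "rep \<noteq> bel"
    and "\<exists>q q'. bel$q - bel$q' \<noteq> rep$q - rep$q'"
  shows "(\<integral>P. utility w K x i bel bel P \<partial>D) > (\<integral>P. utility w K x i bel rep P \<partial>D)"
proof -
  interpret prob_space D by fact
  have cube_sets: "unit_cube \<in> sets D"
    using assms(3) emeasure_notin_sets by force
  have AE_cube: "AE P in D. P \<in> unit_cube"
    by (rule AE_prob_1) (simp add: measure_def assms(3))
  have integrable: "integrable D (\<lambda>P. utility w K x i bel r P)" for r
    using integrable_utility[OF finite_measure_axioms assms(2) AE_cube assms(9,10,14,13)] .
  obtain U where U: "openin (top_of_set unit_cube) U" "U \<noteq> {}"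
    and less: "\<forall>P\<in>U. utility w K x i bel rep P < utility w K x i bel bel P"
    using exists_openin_utility_less[OF assms(9,10) _ assms(12,14,15,5,6,17)] assms(11) by blast
  have "U \<in> sets D"
    using U(1) cube_sets assms(2) by (metis borel_open openin_open sets.Int)
  show ?thesis
  proof (rule integral_less_AE[OF integrable integrable, where A=U])
    show "emeasure D U \<noteq> 0" using U assms(4) unfolding full_support_def by fastforce
    show "U \<in> sets D" by fact
    show "AE P in D. P \<in> U \<longrightarrow> utility w K x i bel rep P \<noteq> utility w K x i bel bel P"
      using less by (auto intro!: AE_I2 simp: less_imp_neq)
    show "AE P in D. utility w K x i bel rep P \<le> utility w K x i bel bel P"
      using AE_cube by eventually_elim (rule utility_le_truthful[OF assms(12) _ assms(14,15)])
  qed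
qed

end
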